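(* Let $(\mathcal{X},\rho,\nu)$ be a metric measure space, where $\rho$ is a separable metric and $\nu$ is a finite Borel measure. Let $c:\mathcal{X}\to\mathcal{Y}$ be a concept whose set of boundary points $\partial\mathcal{X}$ is essentially countable (i.e. $\partial\mathcal{X}$ is the union of a countable set and a $\nu$-null set). Then, in the smoothed online classification protocol against any $\nu$-dominated adversary, the 1-nearest neighbor rule satisfies $$\lim_{T\to\infty}\frac1T\sum_{t=1}^T\ell(x_t,y_t,\hat y_t)=0\quad\text{almost surely}.$$
   Context: The loss $\ell(x,y,\hat y)$ is a non-negative, bounded loss function with $\ell(x,y,y)=0$. Smoothed online classification protocol: the learner fixes a prediction strategy; the adversary, knowing it, fixes a concept $c:\mathcal{X}\to\mathcal{Y}$; at each time $t=1,2,\dots$ the adversary selects a probability distribution $\mu_t$ on $\mathcal{X}$ (possibly depending on the history) and draws $x_t\sim\mu_t$; the learner predicts $\hat y_t$ from $x_t$ and past data; it incurs loss $\ell(x_t,y_t,\hat y_t)$ where $y_t=c(x_t)$, and $(x_t,y_t,\hat y_t)$ is revealed to both. The 1-nearest neighbor rule predicts $\hat y_t=y_{\mathrm{NN}_t}$ with $\mathrm{NN}_t\in\arg\min_{\tau<t}\rho(x_t,x_\tau)$ (ties broken arbitrarily; prediction at $t=1$ arbitrary). A measure $\nu$ uniformly dominates a family $\mathcal{M}$ of probability distributions if for every $\epsilon>0$ there is $\delta>0$ with $\nu(A)<\delta\Rightarrow\mu(A)<\epsilon$ for all measurable $A$ and all $\mu\in\mathcal{M}$; an adversary is $\nu$-dominated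 if at all times it selects $\mu_t$ from a fixed family uniformly dominated by $\nu$. The margin of $x$ is $m_c(x)=\inf_{x':c(x')\neq c(x)}\rho(x,x')$, and $\partial\mathcal{X}=\{x:m_c(x)=0\}$ is the set of boundary points. *)

theory Defs
  imports "HOL-Probability.Probability"
begin

text \<open>Margin of a point x with respect to a concept c (infimum over the empty set is +infinity).\<close>
definition margin :: "('a::metric_space \<Rightarrow> 'b) \<Rightarrow> 'a \<Rightarrow> ereal" where
  "margin c x = (INF x'\<in>{x'. c x' \<noteq> c x}. ereal (dist x x'))"

definition boundary :: "('a::metric_space \<Rightarrow> 'b) \<Rightarrow> 'a set" where
  "boundary c = {x. margin c x = 0}"

definition ess_countable :: "'a measure \<Rightarrow> 'a set \<Rightarrow> bool" where
  "ess_countable nu S \<longleftrightarrow> (\<exists>C N. countable C \<and> N \<in> null_sets nu \<and> S = C \<union> N)"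

definition unif_dominates :: "'a measure \<Rightarrow> 'a measure set \<Rightarrow> bool" where
  "unif_dominates nu Mf \<longleftrightarrow>
     (\<forall>\<epsilon>>0. \<exists>\<delta>>0. \<forall>A\<in>sets nu. measure nu A < \<delta> \<longrightarrow> (\<forall>m\<in>Mf. measure m A < \<epsilon>))"

definition hist :: "(nat \<Rightarrow> 'w \<Rightarrow> 'a) \<Rightarrow> nat \<Rightarrow> 'w \<Rightarrow> (nat \<Rightarrow> 'a)" where
  "hist X t \<omega> = (\<lambda>i\<in>{..<t}. X i \<omega>)"

end

theory Submission
  imports Defs
begin

text \<open>Fix \<open>\<epsilon> > 0\<close> and a bound \<open>B\<close> on the loss. Uniform domination gives \<open>\<delta>\<close> such that
  every adversary distribution puts mass below \<open>\<epsilon>\<close> on any set of \<open>\<nu>\<close>-measure below \<open>\<delta>\<close>.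
  Since the boundary is countable up to a null set, everything outside a set of \<open>\<nu>\<close>-measure
  below \<open>\<delta>\<close> is covered by finitely many Borel cells, each a singleton or a small ball inside a
  region where the label is locally constant. On such a cell the 1-NN rule errs at most once:
  after the first visit, the nearest neighbour of a later point of the cell is close enough to
  carry the same label. So the cumulative loss up to \<open>T\<close> is at most \<open>B\<close> times
  (1 + number of cells + number of visits outside the cells). Each instance falls outside the
  cells with conditional probability at most \<open>\<epsilon>\<close>, and an exponential-moment bound together
  with Borel--Cantelli shows that almost surely the number of such visits is eventually at most
  \<open>3 \<epsilon> T\<close>. Hence the average loss is eventually at most \<open>B (1 + m) / T + 3 B \<epsilon>\<close>, and
  \<open>\<epsilon>\<close> was arbitrary.\<close>

lemma (in finite_measure) countable_Union_approx_finite: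
  assumes "countable F" "F \<subseteq> sets M" "0 < \<eta>"
  shows "\<exists>G\<subseteq>F. finite G \<and> measure M (\<Union>F - \<Union>G) < \<eta>"
proof (cases "F = {}")
  case True
  then show ?thesis using assms(3) by auto
next
  case False
  define D where "D k = \<Union>F - \<Union>(from_nat_into F ` {..<k})" for k
  have F_range: "range (from_nat_into F) = F"
    using range_from_nat_into[OF False assms(1)] .
  have "\<Union>F \<in> sets M"
    using assms(1,2) by (rule sets.countable_Union)
  moreover have "\<Union>(from_nat_into F ` {..<k}) \<in> sets M" for k
    using assms(2) F_range by (intro sets.finite_Union) auto
  ultimately have D_sets: "range D \<subseteq> sets M"
    unfolding D_def by auto
  have "decseq D"
    unfolding D_def decseq_def by auto
  have "(\<Inter>k. D k) = {}"
  proof -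
    have "\<exists>k. x \<notin> D k" for x
    proof (cases "x \<in> \<Union>F")
      case True
      then obtain k where "x \<in> from_nat_into F k"
        using F_range by blast
      then have "x \<notin> D (Suc k)"
        unfolding D_def by blast
      then show ?thesis ..
    next
      case False
      then show ?thesis
        unfolding D_def by blast
    qed
    then show ?thesis by blast
  qed
  then have "(\<lambda>k. measure M (D k)) \<longlonglongrightarrow> 0"
    using finite_Lim_measure_decseq[OF D_sets \<open>decseq D\<close>] by simp
  then have "\<forall>\<^sub>F k in sequentially. measure M (D k) < \<eta>"
    using assms(3) by (rule order_tendstoD)
  then obtain k where "measure M (D k) < \<eta>"
    by (auto simp: eventually_sequentially)
  then show ?thesis
    using F_range unfolding D_def by (intro exI[of _ "from_nat_into F ` {..<k}"]) auto
qed

lemma margin_le_dist: "c x' \<noteq> c x \<Longrightarrow> margin c x \<le> ereal (dist x x')"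
  unfolding margin_def by (rule INF_lower) auto

lemma margin_nonneg: "0 \<le> margin c x"
  unfolding margin_def by (rule INF_greatest) auto

lemma label_eq_if_dist_less_margin: "ereal (dist x z) < margin c x \<Longrightarrow> c z = c x"
  using margin_le_dist by (metis not_le)

text \<open>An open stand-in for the set of points of margin above \<open>2 r\<close>, whose measurability is not
  evident.\<close>
definition margin_nbhd :: "('a::metric_space \<Rightarrow> 'b) \<Rightarrow> real \<Rightarrow> 'a set" where
  "margin_nbhd c r = (\<Union>x\<in>{x. ereal (2 * r) < margin c x}. ball x r)"

lemma open_margin_nbhd: "open (margin_nbhd c r)"
  unfolding margin_nbhd_def by auto

lemma label_eq_in_margin_nbhd:
  assumes "y \<in> margin_nbhd c r" "dist y z < r"
  shows "c z = c y"
proof -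
  obtain x where x: "ereal (2 * r) < margin c x" "dist x y < r"
    using assms(1) unfolding margin_nbhd_def by auto
  have "dist x z < 2 * r" "dist x y < 2 * r"
    using x(2) assms(2) dist_triangle[of x z y] zero_le_dist[of x y] by linarith+
  then have "c z = c x" "c y = c x"
    using x(1) by (auto intro!: label_eq_if_dist_less_margin intro: less_trans[of "ereal _", rotated])
  then show ?thesis by simp
qed

lemma in_margin_nbhd_if_not_boundary:
  assumes "x \<notin> boundary c"
  shows "\<exists>j::nat. x \<in> margin_nbhd c (1 / Suc j)"
proof -
  have "0 < margin c x"
    using assms margin_nonneg[of c x] unfolding boundary_def by auto
  then obtain r where r: "0 < r" "ereal r < margin c x"
    using ereal_dense2 by (metis less_ereal.simps(1) zero_ereal_def)
  obtain j where "inverse (real (Suc j)) < r / 2"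
    using reals_Archimedean r(1) by (metis half_gt_zero)
  then have "ereal (2 * (1 / Suc j)) < margin c x"
    using r(2) by (auto simp: field_simps intro: less_trans[of "ereal _", rotated])
  then show ?thesis
    unfolding margin_nbhd_def by (intro exI[of _ j]) auto
qed

text \<open>A cell on which the nearest-neighbour rule cannot err twice: once \<open>S\<close> has been visited at
  \<open>x'\<close>, the nearest neighbour \<open>z\<close> of any later point \<open>x \<in> S\<close> satisfies \<open>dist x z \<le> dist x x'\<close>.\<close>
definition nn_consistent :: "('a::metric_space \<Rightarrow> 'b) \<Rightarrow> 'a set \<Rightarrow> bool" where
  "nn_consistent c S \<longleftrightarrow> (\<forall>x\<in>S. \<forall>x'\<in>S. \<forall>z. dist x z \<le> dist x x' \<longrightarrow> c z = c x)"

lemma nn_consistent_singleton: "nn_consistent c {x}"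
  unfolding nn_consistent_def by auto

lemma nn_consistent_margin_nbhd_Int_ball: "nn_consistent c (margin_nbhd c r \<inter> ball d (r / 2))"
  unfolding nn_consistent_def
proof (intro ballI allI impI)
  fix x x' z
  assume x: "x \<in> margin_nbhd c r \<inter> ball d (r / 2)" and x': "x' \<in> margin_nbhd c r \<inter> ball d (r / 2)"
    and "dist x z \<le> dist x x'"
  moreover have "dist x x' < r"
    using x x' dist_triangle[of x x' d] by (auto simp: dist_commute)
  ultimately show "c z = c x"
    by (auto intro: label_eq_in_margin_nbhd)
qed

lemma finite_nn_consistent_cover:
  fixes nu :: "'a::{metric_space, second_countable_topology} measure"
  assumes nu_borel: "sets nu = sets borel" and "finite_measure nu"
    and "ess_countable nu (boundary c)" and "0 < \<delta>"
  shows "\<exists>G. finite G \<and> (\<forall>S\<in>G. S \<in> sets borel \<and> nn_consistent c S) \<and> measure nu (- \<Union>G) < \<delta>"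
proof -
  interpret finite_measure nu by fact
  obtain C N where C: "countable C" and N: "N \<in> null_sets nu" and bdry: "boundary c = C \<union> N"
    using assms(3) unfolding ess_countable_def by blast
  obtain D :: "'a set" where "countable D" and D_dense: "\<And>U. open U \<Longrightarrow> U \<noteq> {} \<Longrightarrow> \<exists>d\<in>D. d \<in> U"
    using countable_dense_exists by blast
  define cell where "cell j d = margin_nbhd c (1 / Suc j) \<inter> ball d (1 / Suc j / 2)" for j d
  define F where "F = (\<lambda>e. {e}) ` C \<union> (\<Union>j. cell j ` D)"
  have "countable F"
    unfolding F_def using C \<open>countable D\<close> by auto
  have "cell j d \<in> sets borel \<and> nn_consistent c (cell j d)" for j d
    unfolding cell_def
    by (simp only: nn_consistent_margin_nbhd_Int_ball) (auto simp: open_margin_nbhd)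
  then have F_cells: "S \<in> sets borel \<and> nn_consistent c S" if "S \<in> F" for S
    using that unfolding F_def by (auto simp: nn_consistent_singleton)
  have "- \<Union>F \<subseteq> N"
  proof
    fix x assume x: "x \<in> - \<Union>F"
    show "x \<in> N"
    proof (cases "x \<in> boundary c")
      case True
      with x show ?thesis
        unfolding F_def bdry by blast
    next
      case False
      then obtain j where j: "x \<in> margin_nbhd c (1 / Suc j)"
        using in_margin_nbhd_if_not_boundary by blast
      obtain d where "d \<in> D" "d \<in> ball x (1 / Suc j / 2)"
        using D_dense[of "ball x (1 / Suc j / 2)"] by auto
      then have "x \<in> cell j d"
        using j by (simp add: cell_def dist_commute)
      with \<open>d \<in> D\<close> x show ?thesis
        unfolding F_def by blast
    qed
  qed
  obtain G where "G \<subseteq> F" "finite G" and G: "measure nu (\<Union>F - \<Union>G) < \<delta>"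
    using countable_Union_approx_finite[OF \<open>countable F\<close> _ \<open>0 < \<delta>\<close>] F_cells nu_borel by blast
  have sets_nu: "S \<in> sets nu" if "S \<in> sets borel" for S
    using that nu_borel by simp
  have "\<Union>F \<in> sets nu"
    using \<open>countable F\<close> F_cells sets_nu by (intro sets.countable_Union) auto
  have "\<Union>G \<in> sets nu"
    using \<open>finite G\<close> \<open>G \<subseteq> F\<close> F_cells sets_nu by (intro sets.finite_Union) auto
  have "- \<Union>G \<subseteq> (\<Union>F - \<Union>G) \<union> N"
    using \<open>- \<Union>F \<subseteq> N\<close> by blast
  then have "measure nu (- \<Union>G) \<le> measure nu ((\<Union>F - \<Union>G) \<union> N)"
    using \<open>\<Union>F \<in> sets nu\<close> \<open>\<Union>G \<in> sets nu\<close> N by (intro finite_measure_mono) auto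
  also have "\<dots> = measure nu (\<Union>F - \<Union>G)"
    using \<open>\<Union>F \<in> sets nu\<close> \<open>\<Union>G \<in> sets nu\<close> N by (intro measure_Un_null_set) auto
  finally show ?thesis
    using G \<open>finite G\<close> \<open>G \<subseteq> F\<close> F_cells by (intro exI[of _ G]) auto
qed

lemma finite_nn_consistent_cover_dominated:
  fixes nu :: "'a::{metric_space, second_countable_topology} measure"
  assumes nu_borel: "sets nu = sets borel" and "finite_measure nu"
    and "ess_countable nu (boundary c)" and "unif_dominates nu Mf" and "0 < \<epsilon>"
  shows "\<exists>G. finite G \<and> (\<forall>S\<in>G. S \<in> sets borel \<and> nn_consistent c S) \<and> (\<forall>m\<in>Mf. measure m (- \<Union>G) < \<epsilon>)"
proof -
  obtain \<delta> where "0 < \<delta>" and \<delta>: "\<And>A. A \<in> sets nu \<Longrightarrow> measure nu A < \<delta> \<Longrightarrow> \<forall>m\<in>Mf. measure m A < \<epsilon>"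
    using assms(4,5) unfolding unif_dominates_def by blast
  obtain G where "finite G" and G: "\<forall>S\<in>G. S \<in> sets borel \<and> nn_consistent c S"
    and G_small: "measure nu (- \<Union>G) < \<delta>"
    using finite_nn_consistent_cover[OF assms(1-3) \<open>0 < \<delta>\<close>] by blast
  have "\<Union>G \<in> sets borel"
    using \<open>finite G\<close> G by (intro sets.finite_Union) auto
  then have "- \<Union>G \<in> sets nu"
    using borel_comp nu_borel by simp
  then show ?thesis
    using \<open>finite G\<close> G \<delta>[OF _ G_small] by (intro exI[of _ G]) simp
qed

lemma card_nn_mistakes_in_cells_le:
  fixes x :: "nat \<Rightarrow> 'a::metric_space" and nn :: "nat \<Rightarrow> nat"
  assumes nn_min: "\<And>t \<tau>. 0 < t \<Longrightarrow> \<tau> < t \<Longrightarrow> dist (x t) (x (nn t)) \<le> dist (x t) (x \<tau>)"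
    and "finite G" and G: "\<And>S. S \<in> G \<Longrightarrow> nn_consistent c S"
  defines "M \<equiv> {t. 0 < t \<and> x t \<in> \<Union>G \<and> c (x (nn t)) \<noteq> c (x t)}"
  shows "finite M" and "card M \<le> card G"
proof -
  define cell where "cell t = (SOME S. S \<in> G \<and> x t \<in> S)" for t
  have cell: "cell t \<in> G \<and> x t \<in> cell t" if "t \<in> M" for t
  proof -
    have "\<exists>S. S \<in> G \<and> x t \<in> S"
      using that by (auto simp: M_def)
    then show ?thesis
      unfolding cell_def by (rule someI_ex)
  qed
  have no_revisit: False if "t1 \<in> M" "t2 \<in> M" "t1 < t2" "cell t1 = cell t2" for t1 t2
  proof -
    have "0 < t2" "c (x (nn t2)) \<noteq> c (x t2)"
      using that(2) by (auto simp: M_def)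
    moreover have "dist (x t2) (x (nn t2)) \<le> dist (x t2) (x t1)"
      using nn_min \<open>0 < t2\<close> \<open>t1 < t2\<close> by blast
    ultimately show False
      using G cell[OF that(1)] cell[OF that(2)] that(4) unfolding nn_consistent_def by metis
  qed
  have "inj_on cell M"
    by (rule inj_onI) (metis no_revisit linorder_neqE_nat)
  moreover have "cell ` M \<subseteq> G"
    using cell by blast
  ultimately show "finite M" and "card M \<le> card G"
    using \<open>finite G\<close> by (auto intro: inj_on_finite card_inj_on_le)
qed

lemma sum_nn_loss_le:
  fixes x :: "nat \<Rightarrow> 'a::metric_space" and nn :: "nat \<Rightarrow> nat"
    and loss :: "'a \<Rightarrow> 'b \<Rightarrow> 'b \<Rightarrow> real"
  assumes loss_nonneg: "\<And>x y y'. 0 \<le> loss x y y'" and loss_le: "\<And>x y y'. loss x y y' \<le> B"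
    and loss_zero: "\<And>x y. loss x y y = 0"
    and nn_min: "\<And>t \<tau>. 0 < t \<Longrightarrow> \<tau> < t \<Longrightarrow> dist (x t) (x (nn t)) \<le> dist (x t) (x \<tau>)"
    and "finite G" and "\<And>S. S \<in> G \<Longrightarrow> nn_consistent c S"
  shows "(\<Sum>t<T. loss (x t) (c (x t)) (if t = 0 then y0 else c (x (nn t))))
     \<le> B * (1 + real (card G) + (\<Sum>t<T. indicator (- \<Union>G) (x t)))"
proof -
  define M where "M = {t. 0 < t \<and> x t \<in> \<Union>G \<and> c (x (nn t)) \<noteq> c (x t)}"
  have "finite M" "card M \<le> card G"
    unfolding M_def using card_nn_mistakes_in_cells_le[where x=x and nn=nn, OF nn_min assms(5,6)] by blast+
  have "0 \<le> B"
    using loss_nonneg loss_le order_trans by blast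
  have loss_le_indicators: "loss (x t) (c (x t)) (if t = 0 then y0 else c (x (nn t)))
      \<le> B * (indicator {0} t + indicator (- \<Union>G) (x t) + indicator M t)" for t
  proof (cases "t = 0 \<or> x t \<notin> \<Union>G \<or> t \<in> M")
    case True
    then have "1 \<le> indicator {0} t + indicator (- \<Union>G) (x t) + (indicator M t :: real)"
      by (auto simp: indicator_def)
    then show ?thesis
      using loss_le \<open>0 \<le> B\<close> by (metis mult.right_neutral mult_left_mono order_trans)
  next
    case False
    then show ?thesis
      using loss_zero \<open>0 \<le> B\<close> by (auto simp: M_def)
  qed
  have "(\<Sum>t<T. loss (x t) (c (x t)) (if t = 0 then y0 else c (x (nn t))))
      \<le> B * ((\<Sum>t<T. indicator {0} t) + (\<Sum>t<T. indicator (- \<Union>G) (x t)) + (\<Sum>t<T. indicator M t))"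
  proof -
    have "(\<Sum>t<T. loss (x t) (c (x t)) (if t = 0 then y0 else c (x (nn t))))
        \<le> (\<Sum>t<T. B * (indicator {0} t + indicator (- \<Union>G) (x t) + indicator M t))"
      using loss_le_indicators by (rule sum_mono)
    also have "\<dots> = B * ((\<Sum>t<T. indicator {0} t) + (\<Sum>t<T. indicator (- \<Union>G) (x t))
        + (\<Sum>t<T. indicator M t))"
      by (simp only: sum.distrib flip: sum_distrib_left)
    finally show ?thesis .
  qed
  moreover have "(\<Sum>t<T. indicator {0} t :: real) \<le> 1"
    by (cases T) (simp_all add: indicator_def)
  moreover have "(\<Sum>t<T. indicator M t :: real) \<le> card G"
  proof -
    have "(\<Sum>t<T. indicator M t :: real) = card ({..<T} \<inter> M)"
      by (simp add: indicator_def)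
    then show ?thesis
      using card_mono[OF \<open>finite M\<close>, of "{..<T} \<inter> M"] \<open>card M \<le> card G\<close> by simp
  qed
  ultimately show ?thesis
    using \<open>0 \<le> B\<close> by (smt (verit) mult_left_mono)
qed

lemma LIMSEQ_divide_real_zero_if_sublinear:
  fixes a :: "nat \<Rightarrow> real"
  assumes "\<And>n. \<exists>M. \<forall>\<^sub>F T in sequentially. a T \<le> M + real T / Suc n"
    and "\<And>T. 0 \<le> a T"
  shows "(\<lambda>T. a T / real T) \<longlonglongrightarrow> 0"
proof (rule LIMSEQ_I)
  fix e :: real
  assume "0 < e"
  then obtain n where n: "inverse (real (Suc n)) < e / 2"
    using reals_Archimedean half_gt_zero by blast
  obtain M N0 where N0: "\<And>T. N0 \<le> T \<Longrightarrow> a T \<le> M + real T / Suc n"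
    using assms(1)[of n] unfolding eventually_sequentially by blast
  obtain N1 where N1: "2 * M / e < real N1"
    using reals_Archimedean2 by blast
  have "norm (a T / real T - 0) < e" if T: "max (max N0 N1) 1 \<le> T" for T
  proof -
    have "0 < real T"
      using T by simp
    have "2 * M < e * real N1"
      using N1 \<open>0 < e\<close> by (simp add: field_simps)
    also have "\<dots> \<le> e * real T"
      using T \<open>0 < e\<close> by simp
    finally have "M < e / 2 * real T"
      by simp
    have "a T / real T \<le> (M + real T / Suc n) / real T"
      using N0[of T] T \<open>0 < real T\<close> by (simp add: divide_right_mono)
    also have "\<dots> = M / real T + 1 / Suc n"
      using \<open>0 < real T\<close> by (simp add: add_divide_distrib)
    also have "\<dots> < e"
    proof -
      have "M / real T < e / 2"
        using \<open>M < e / 2 * real T\<close> \<open>0 < real T\<close> by (simp add: divide_less_eq)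
      moreover have "1 / real (Suc n) < e / 2"
        using n by (simp add: inverse_eq_divide)
      ultimately show ?thesis
        by linarith
    qed
    finally show ?thesis
      using assms(2)[of T] \<open>0 < real T\<close> by simp
  qed
  then show "\<exists>N. \<forall>T\<ge>N. norm (a T / real T - 0) < e"
    by blast
qed

lemma borel_measurable_sum_indicator_PiM[measurable]:
  assumes [measurable]: "A \<in> sets borel"
  shows "(\<lambda>h. \<Sum>t<T. indicator A (h t) :: real) \<in> borel_measurable (Pi\<^sub>M {..<T} (\<lambda>_. borel))"
proof (intro borel_measurable_sum)
  fix t assume "t \<in> {..<T}"
  then have [measurable]: "(\<lambda>h. h t) \<in> measurable (Pi\<^sub>M {..<T} (\<lambda>_. borel)) borel"
    by (rule measurable_component_singleton)
  show "(\<lambda>h. indicator A (h t) :: real) \<in> borel_measurable (Pi\<^sub>M {..<T} (\<lambda>_. borel))"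
    by measurable
qed

lemma (in finite_measure) integral_sum_indicator:
  assumes "finite K" "\<And>k. S k \<in> sets M"
  shows "(\<integral>x. (\<Sum>k\<in>K. a k * indicator (S k) x) \<partial>M) = (\<Sum>k\<in>K. a k * measure M (S k))"
proof -
  have "(\<integral>x. (\<Sum>k\<in>K. a k * indicator (S k) x) \<partial>M) = (\<Sum>k\<in>K. (\<integral>x. a k * indicator (S k) x \<partial>M))"
    by (rule Bochner_Integration.integral_sum) (use assms(2) in \<open>auto simp: emeasure_eq_measure\<close>)
  also have "\<dots> = (\<Sum>k\<in>K. a k * measure M (S k))"
    by (rule sum.cong) (auto simp: assms(2))
  finally show ?thesis .
qed

text \<open>\<open>X_law\<close> says that, conditionally on the history \<open>hist X t\<close>, the instance \<open>X t\<close> has law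
  \<open>\<mu> t (hist X t)\<close>.\<close>
locale smoothed_process = prob_space P for P :: "'w measure" +
  fixes X :: "nat \<Rightarrow> 'w \<Rightarrow> 'a::topological_space"
    and \<mu> :: "nat \<Rightarrow> (nat \<Rightarrow> 'a) \<Rightarrow> 'a measure"
  assumes X_measurable[measurable]: "\<And>t. X t \<in> measurable P borel"
    and X_law: "\<And>t A H. A \<in> sets borel \<Longrightarrow> H \<in> sets (Pi\<^sub>M {..<t} (\<lambda>_. borel)) \<Longrightarrow>
          measure P {\<omega> \<in> space P. hist X t \<omega> \<in> H \<and> X t \<omega> \<in> A}
            = (\<integral>\<omega>. indicator H (hist X t \<omega>) * measure (\<mu> t (hist X t \<omega>)) A \<partial>P)"
    and \<mu>_measurable: "\<And>t A. A \<in> sets borel \<Longrightarrow>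
          (\<lambda>h. measure (\<mu> t h) A) \<in> borel_measurable (Pi\<^sub>M {..<t} (\<lambda>_. borel))"
begin

lemma hist_measurable[measurable]: "hist X T \<in> measurable P (Pi\<^sub>M {..<T} (\<lambda>_. borel))"
  unfolding hist_def by measurable

definition visits :: "'a set \<Rightarrow> nat \<Rightarrow> 'w \<Rightarrow> real" where
  "visits A T \<omega> = (\<Sum>t<T. indicator A (X t \<omega>))"

lemma visits_measurable[measurable]:
  assumes [measurable]: "A \<in> sets borel"
  shows "visits A T \<in> borel_measurable P"
  unfolding visits_def by measurable

lemma visits_Suc: "visits A (Suc T) \<omega> = visits A T \<omega> + indicator A (X T \<omega>)"
  by (simp add: visits_def)

lemma visits_eq_card: "visits A T \<omega> = card {t \<in> {..<T}. X t \<omega> \<in> A}"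
  by (simp add: visits_def indicator_def Int_def)

lemma visits_le: "visits A T \<omega> \<le> real T"
  using card_mono[of "{..<T}" "{t \<in> {..<T}. X t \<omega> \<in> A}"] by (auto simp: visits_eq_card)

lemma measure_hist_step_le:
  assumes "A \<in> sets borel" "H \<in> sets (Pi\<^sub>M {..<T} (\<lambda>_. borel))"
    and \<mu>_le: "\<And>h. measure (\<mu> T h) A \<le> \<epsilon>"
  shows "prob {\<omega> \<in> space P. hist X T \<omega> \<in> H \<and> X T \<omega> \<in> A}
    \<le> \<epsilon> * prob {\<omega> \<in> space P. hist X T \<omega> \<in> H}"
proof -
  note [measurable] = assms(1,2)
  have [measurable]: "(\<lambda>\<omega>. measure (\<mu> T (hist X T \<omega>)) A) \<in> borel_measurable P"
    using measurable_comp[OF hist_measurable \<mu>_measurable[OF assms(1)]] by (simp add: comp_def)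
  have "0 \<le> \<epsilon>"
    using \<mu>_le measure_nonneg order_trans by blast
  have "prob {\<omega> \<in> space P. hist X T \<omega> \<in> H \<and> X T \<omega> \<in> A}
      = (\<integral>\<omega>. indicator H (hist X T \<omega>) * measure (\<mu> T (hist X T \<omega>)) A \<partial>P)"
    by (rule X_law[OF assms(1,2)])
  also have "\<dots> \<le> (\<integral>\<omega>. indicator {\<omega> \<in> space P. hist X T \<omega> \<in> H} \<omega> * \<epsilon> \<partial>P)"
  proof (rule integral_mono)
    show "integrable P (\<lambda>\<omega>. indicator H (hist X T \<omega>) * measure (\<mu> T (hist X T \<omega>)) A)"
      using \<mu>_le \<open>0 \<le> \<epsilon>\<close>
      by (intro integrable_const_bound[where B = \<epsilon>] AE_I2) (auto simp: indicator_def)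
    show "integrable P (\<lambda>\<omega>. indicator {\<omega> \<in> space P. hist X T \<omega> \<in> H} \<omega> * \<epsilon>)"
      using \<open>0 \<le> \<epsilon>\<close> by (intro integrable_const_bound[where B = \<epsilon>] AE_I2) (auto simp: indicator_def)
    show "indicator H (hist X T \<omega>) * measure (\<mu> T (hist X T \<omega>)) A
        \<le> indicator {\<omega> \<in> space P. hist X T \<omega> \<in> H} \<omega> * \<epsilon>" if "\<omega> \<in> space P" for \<omega>
      using that \<mu>_le by (auto simp: indicator_def)
  qed
  also have "\<dots> = \<epsilon> * prob {\<omega> \<in> space P. hist X T \<omega> \<in> H}"
    by simp
  finally show ?thesis .
qed

text \<open>\<open>visits A T\<close> is a function of the history, so \<open>exp (visits A T)\<close> splits along history
  events, on each of which \<open>measure_hist_step_le\<close> applies.\<close>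
lemma integral_exp_visits_indicator_le:
  assumes A: "A \<in> sets borel" and \<mu>_le: "\<And>h. measure (\<mu> T h) A \<le> \<epsilon>"
  shows "(\<integral>\<omega>. exp (visits A T \<omega>) * indicator A (X T \<omega>) \<partial>P)
    \<le> \<epsilon> * (\<integral>\<omega>. exp (visits A T \<omega>) \<partial>P)"
proof -
  note [measurable] = A
  define H where
    "H k = {h \<in> space (Pi\<^sub>M {..<T} (\<lambda>_. borel)). (\<Sum>t<T. indicator A (h t)) = real k}" for k :: nat
  have H_sets[measurable]: "H k \<in> sets (Pi\<^sub>M {..<T} (\<lambda>_. borel))" for k
    unfolding H_def by measurable
  define L where "L k = {\<omega> \<in> space P. hist X T \<omega> \<in> H k}" for k
  define L_in_A where "L_in_A k = {\<omega> \<in> space P. hist X T \<omega> \<in> H k \<and> X T \<omega> \<in> A}" for k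
  have L_events[measurable]: "L k \<in> events" "L_in_A k \<in> events" for k
    unfolding L_def L_in_A_def by measurable
  have "(\<Sum>t<T. indicator A (hist X T \<omega> t)) = visits A T \<omega>" for \<omega>
    unfolding visits_def hist_def by (rule sum.cong) auto
  then have L_iff: "\<omega> \<in> L k \<longleftrightarrow> visits A T \<omega> = real k" if "\<omega> \<in> space P" for k \<omega>
    using that measurable_space[OF hist_measurable that] by (simp add: L_def H_def)
  have exp_visits: "exp (visits A T \<omega>) = (\<Sum>k\<le>T. exp (real k) * indicator (L k) \<omega>)"
    if "\<omega> \<in> space P" for \<omega>
  proof -
    define k0 where "k0 = card {t \<in> {..<T}. X t \<omega> \<in> A}"
    have "k0 \<le> T" "visits A T \<omega> = real k0"
      unfolding k0_def using card_mono[of "{..<T}" "{t \<in> {..<T}. X t \<omega> \<in> A}"]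
      by (auto simp: visits_eq_card)
    moreover have "(\<Sum>k\<le>T. exp (real k) * indicator (L k) \<omega>) = (\<Sum>k\<le>T. if k = k0 then exp (real k0) else 0)"
      using L_iff[OF that] \<open>visits A T \<omega> = real k0\<close> by (intro sum.cong) auto
    ultimately show ?thesis
      by simp
  qed
  have "(\<integral>\<omega>. exp (visits A T \<omega>) * indicator A (X T \<omega>) \<partial>P)
      = (\<integral>\<omega>. (\<Sum>k\<le>T. exp (real k) * indicator (L_in_A k) \<omega>) \<partial>P)"
    by (intro Bochner_Integration.integral_cong)
      (auto simp: exp_visits sum_distrib_right L_def L_in_A_def indicator_def)
  also have "\<dots> = (\<Sum>k\<le>T. exp (real k) * prob (L_in_A k))"
    by (rule integral_sum_indicator) (simp_all add: L_events)
  also have "\<dots> \<le> (\<Sum>k\<le>T. exp (real k) * (\<epsilon> * prob (L k)))"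
    using measure_hist_step_le[OF A H_sets \<mu>_le]
    by (intro sum_mono mult_left_mono) (auto simp: L_def L_in_A_def)
  also have "\<dots> = \<epsilon> * (\<integral>\<omega>. (\<Sum>k\<le>T. exp (real k) * indicator (L k) \<omega>) \<partial>P)"
    by (subst integral_sum_indicator) (simp_all add: L_events sum_distrib_left mult_ac)
  also have "\<dots> = \<epsilon> * (\<integral>\<omega>. exp (visits A T \<omega>) \<partial>P)"
    by (intro arg_cong[where f = "(*) \<epsilon>"] Bochner_Integration.integral_cong) (auto simp: exp_visits)
  finally show ?thesis .
qed

lemma integrable_exp_visits:
  assumes "A \<in> sets borel" "f \<in> borel_measurable P" "\<And>\<omega>. \<bar>f \<omega>\<bar> \<le> 1"
  shows "integrable P (\<lambda>\<omega>. exp (visits A T \<omega>) * f \<omega>)"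
proof (rule integrable_const_bound[where B = "exp (real T)"])
  have "exp (visits A T \<omega>) * \<bar>f \<omega>\<bar> \<le> exp (real T) * 1" for \<omega>
    using visits_le[of A T \<omega>] assms(3)[of \<omega>] by (intro mult_mono) auto
  then show "AE \<omega> in P. norm (exp (visits A T \<omega>) * f \<omega>) \<le> exp (real T)"
    by (simp add: abs_mult)
qed (use assms in measurable)

lemma integral_exp_visits_le:
  assumes A: "A \<in> sets borel" and \<mu>_le: "\<And>t h. measure (\<mu> t h) A \<le> \<epsilon>"
  shows "(\<integral>\<omega>. exp (visits A T \<omega>) \<partial>P) \<le> (1 + (exp 1 - 1) * \<epsilon>) ^ T"
proof (induction T)
  case 0
  then show ?case
    by (simp add: visits_def)
next
  case (Suc T)
  note [measurable] = A
  have "0 \<le> \<epsilon>"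
    using \<mu>_le measure_nonneg order_trans by blast
  have "(\<integral>\<omega>. exp (visits A (Suc T) \<omega>) \<partial>P)
      = (\<integral>\<omega>. exp (visits A T \<omega>) + (exp 1 - 1) * (exp (visits A T \<omega>) * indicator A (X T \<omega>)) \<partial>P)"
    by (intro Bochner_Integration.integral_cong) (auto simp: visits_Suc exp_add indicator_def algebra_simps)
  also have "\<dots> = (\<integral>\<omega>. exp (visits A T \<omega>) \<partial>P)
      + (exp 1 - 1) * (\<integral>\<omega>. exp (visits A T \<omega>) * indicator A (X T \<omega>) \<partial>P)"
    using integrable_exp_visits[OF A, of "\<lambda>_. 1" T] integrable_exp_visits[OF A, of "\<lambda>\<omega>. indicator A (X T \<omega>)" T]
    by simp
  also have "\<dots> \<le> (\<integral>\<omega>. exp (visits A T \<omega>) \<partial>P) + (exp 1 - 1) * (\<epsilon> * (\<integral>\<omega>. exp (visits A T \<omega>) \<partial>P))"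
    using integral_exp_visits_indicator_le[OF A \<mu>_le, of T] by (intro add_left_mono mult_left_mono) auto
  also have "\<dots> = (1 + (exp 1 - 1) * \<epsilon>) * (\<integral>\<omega>. exp (visits A T \<omega>) \<partial>P)"
    by (simp add: algebra_simps)
  also have "\<dots> \<le> (1 + (exp 1 - 1) * \<epsilon>) * (1 + (exp 1 - 1) * \<epsilon>) ^ T"
    using Suc.IH \<open>0 \<le> \<epsilon>\<close> by (intro mult_left_mono) auto
  finally show ?case
    by simp
qed

text \<open>Since \<open>e - 1 < 3\<close>, the growth factor \<open>1 + (e - 1) \<epsilon>\<close> of the exponential moment is below
  \<open>exp (3 \<epsilon>)\<close>, so Markov's inequality makes the probabilities of \<open>visits A T \<ge> 3 \<epsilon> T\<close>
  geometrically small and Borel--Cantelli applies.\<close>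
lemma AE_eventually_visits_le:
  assumes A: "A \<in> sets borel" and \<mu>_le: "\<And>t h. measure (\<mu> t h) A \<le> \<epsilon>" and "0 < \<epsilon>"
  shows "AE \<omega> in P. \<forall>\<^sub>F T in sequentially. visits A T \<omega> \<le> 3 * \<epsilon> * real T"
proof -
  note [measurable] = A
  define q where "q = 1 + (exp 1 - 1) * \<epsilon>"
  define r where "r = q / exp (3 * \<epsilon>)"
  have "q \<le> 1 + 2 * \<epsilon>"
    using exp_le \<open>0 < \<epsilon>\<close> unfolding q_def by (intro add_left_mono mult_right_mono) auto
  also have "\<dots> < exp (3 * \<epsilon>)"
    using \<open>0 < \<epsilon>\<close> exp_ge_add_one_self[of "3 * \<epsilon>"] by linarith
  finally have "0 < r" "r < 1"
    using \<open>0 < \<epsilon>\<close> unfolding r_def q_def by (auto simp: add_pos_nonneg)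
  define E where "E T = {\<omega> \<in> space P. exp (3 * \<epsilon> * real T) \<le> exp (visits A T \<omega>)}" for T
  have [measurable]: "E T \<in> events" for T
    unfolding E_def by measurable
  have "prob (E T) \<le> r ^ T" for T
  proof -
    have "prob (E T) \<le> (\<integral>\<omega>. exp (visits A T \<omega>) \<partial>P) / exp (3 * \<epsilon> * real T)"
      unfolding E_def
      using integrable_exp_visits[OF A, of "\<lambda>_. 1" T]
      by (intro integral_Markov_inequality_measure) auto
    also have "\<dots> \<le> q ^ T / exp (3 * \<epsilon> * real T)"
      using integral_exp_visits_le[OF A \<mu>_le, of T] unfolding q_def by (rule divide_right_mono) simp
    also have "exp (3 * \<epsilon> * real T) = exp (3 * \<epsilon>) ^ T"
      by (simp add: mult.commute flip: exp_of_nat_mult)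
    also have "q ^ T / exp (3 * \<epsilon>) ^ T = r ^ T"
      by (simp add: r_def power_divide)
    finally show ?thesis .
  qed
  then have "summable (\<lambda>T. prob (E T))"
    using \<open>0 < r\<close> \<open>r < 1\<close> by (intro summable_comparison_test'[OF summable_geometric[of r], where N = 0]) auto
  then have "AE \<omega> in P. \<forall>\<^sub>F T in sequentially. \<omega> \<in> space P - E T"
    by (intro borel_cantelli_AE1) (auto simp: emeasure_eq_measure)
  then show ?thesis
    by (rule AE_mp) (auto elim!: eventually_mono simp: E_def not_le)
qed

end

lemma AE_eventually_sum_nn_loss_le:
  fixes X :: "nat \<Rightarrow> 'w \<Rightarrow> 'a::metric_space" and nn :: "nat \<Rightarrow> 'w \<Rightarrow> nat"
    and loss :: "'a \<Rightarrow> 'b \<Rightarrow> 'b \<Rightarrow> real"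
  assumes "smoothed_process P X \<mu>"
    and loss_nonneg: "\<And>x y y'. 0 \<le> loss x y y'" and loss_le: "\<And>x y y'. loss x y y' \<le> B"
    and loss_zero: "\<And>x y. loss x y y = 0"
    and nn_min: "\<And>t \<omega> \<tau>. 0 < t \<Longrightarrow> \<tau> < t \<Longrightarrow> dist (X t \<omega>) (X (nn t \<omega>) \<omega>) \<le> dist (X t \<omega>) (X \<tau> \<omega>)"
    and "finite G" and G: "\<forall>S\<in>G. S \<in> sets borel \<and> nn_consistent c S"
    and \<mu>_le: "\<And>t h. measure (\<mu> t h) (- \<Union>G) \<le> \<epsilon>" and "0 < \<epsilon>"
  shows "AE \<omega> in P. \<forall>\<^sub>F T in sequentially.
    (\<Sum>t<T. loss (X t \<omega>) (c (X t \<omega>)) (if t = 0 then y0 \<omega> else c (X (nn t \<omega>) \<omega>)))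
      \<le> B * (1 + real (card G)) + B * (3 * \<epsilon> * real T)"
proof -
  interpret smoothed_process P X \<mu>
    by fact
  have "- \<Union>G \<in> sets borel"
    using \<open>finite G\<close> G by (intro borel_comp sets.finite_Union) auto
  then have "AE \<omega> in P. \<forall>\<^sub>F T in sequentially. visits (- \<Union>G) T \<omega> \<le> 3 * \<epsilon> * real T"
    using \<mu>_le \<open>0 < \<epsilon>\<close> by (rule AE_eventually_visits_le)
  moreover have loss_le_visits: "(\<Sum>t<T. loss (X t \<omega>) (c (X t \<omega>)) (if t = 0 then y0 \<omega> else c (X (nn t \<omega>) \<omega>)))
      \<le> B * (1 + real (card G) + visits (- \<Union>G) T \<omega>)" for T \<omega>
    unfolding visits_def
    by (rule sum_nn_loss_le[where x = "\<lambda>t. X t \<omega>" and nn = "\<lambda>t. nn t \<omega>"])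
      (use loss_nonneg loss_le loss_zero nn_min G \<open>finite G\<close> in auto)
  moreover have "0 \<le> B"
    using loss_nonneg loss_le order_trans by blast
  ultimately show ?thesis
  proof (elim AE_mp, intro AE_I2 impI)
    fix \<omega>
    assume "\<forall>\<^sub>F T in sequentially. visits (- \<Union>G) T \<omega> \<le> 3 * \<epsilon> * real T"
    then show "\<forall>\<^sub>F T in sequentially. (\<Sum>t<T. loss (X t \<omega>) (c (X t \<omega>))
        (if t = 0 then y0 \<omega> else c (X (nn t \<omega>) \<omega>))) \<le> B * (1 + real (card G)) + B * (3 * \<epsilon> * real T)"
    proof (rule eventually_mono)
      fix T
      assume "visits (- \<Union>G) T \<omega> \<le> 3 * \<epsilon> * real T"
      then have "B * visits (- \<Union>G) T \<omega> \<le> B * (3 * \<epsilon> * real T)"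
        using \<open>0 \<le> B\<close> by (rule mult_left_mono)
      then show "(\<Sum>t<T. loss (X t \<omega>) (c (X t \<omega>)) (if t = 0 then y0 \<omega> else c (X (nn t \<omega>) \<omega>)))
          \<le> B * (1 + real (card G)) + B * (3 * \<epsilon> * real T)"
        using loss_le_visits[of \<omega> T] by (simp add: distrib_left)
    qed
  qed
qed

theorem theorem1:
  fixes nu :: "'a::{metric_space, second_countable_topology} measure"
    and c :: "'a \<Rightarrow> 'b"
    and loss :: "'a \<Rightarrow> 'b \<Rightarrow> 'b \<Rightarrow> real"
    and Mf :: "'a measure set"
    and \<mu> :: "nat \<Rightarrow> (nat \<Rightarrow> 'a) \<Rightarrow> 'a measure"
    and P :: "'w measure"
    and X :: "nat \<Rightarrow> 'w \<Rightarrow> 'a"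
    and nn :: "nat \<Rightarrow> 'w \<Rightarrow> nat"
    and yhat0 :: "'w \<Rightarrow> 'b"
  assumes nu_borel: "sets nu = sets borel"
    and nu_finite: "finite_measure nu"
    and bdry: "ess_countable nu (boundary c)"
    and loss_nonneg: "\<And>x y y'. 0 \<le> loss x y y'"
    and loss_bounded: "\<exists>B. \<forall>x y y'. loss x y y' \<le> B"
    and loss_zero: "\<And>x y. loss x y y = 0"
    and Mf_prob: "\<And>m. m \<in> Mf \<Longrightarrow> prob_space m \<and> sets m = sets borel"
    and dominated: "unif_dominates nu Mf"
    and adv_in: "\<And>t h. \<mu> t h \<in> Mf"
    and adv_meas: "\<And>t A. A \<in> sets borel \<Longrightarrow>
          (\<lambda>h. measure (\<mu> t h) A) \<in> borel_measurable (Pi\<^sub>M {..<t} (\<lambda>_. borel))"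
    and P_prob: "prob_space P"
    and X_meas: "\<And>t. X t \<in> measurable P borel"
    and X_law: "\<And>t A H. A \<in> sets borel \<Longrightarrow> H \<in> sets (Pi\<^sub>M {..<t} (\<lambda>_. borel)) \<Longrightarrow>
          measure P {\<omega> \<in> space P. hist X t \<omega> \<in> H \<and> X t \<omega> \<in> A}
            = (\<integral>\<omega>. indicator H (hist X t \<omega>) * measure (\<mu> t (hist X t \<omega>)) A \<partial>P)"
    and nn_lt: "\<And>t \<omega>. 0 < t \<Longrightarrow> nn t \<omega> < t"
    and nn_min: "\<And>t \<omega> \<tau>. 0 < t \<Longrightarrow> \<tau> < t \<Longrightarrow>
          dist (X t \<omega>) (X (nn t \<omega>) \<omega>) \<le> dist (X t \<omega>) (X \<tau> \<omega>)"
  shows "AE \<omega> in P.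
    (\<lambda>T. (\<Sum>t<T. loss (X t \<omega>) (c (X t \<omega>))
              (if t = 0 then yhat0 \<omega> else c (X (nn t \<omega>) \<omega>))) / real T)
      \<longlonglongrightarrow> 0"
proof -
  have process: "smoothed_process P X \<mu>"
    by (intro smoothed_process.intro smoothed_process_axioms.intro) (fact P_prob X_meas X_law adv_meas)+
  obtain B where B: "\<And>x y y'. loss x y y' \<le> B"
    using loss_bounded by blast
  have "0 \<le> B"
    using loss_nonneg B order_trans by blast
  define a where "a T \<omega> = (\<Sum>t<T. loss (X t \<omega>) (c (X t \<omega>))
    (if t = 0 then yhat0 \<omega> else c (X (nn t \<omega>) \<omega>)))" for T \<omega>
  have "AE \<omega> in P. \<exists>M. \<forall>\<^sub>F T in sequentially. a T \<omega> \<le> M + real T / Suc n" for n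
  proof -
    define \<epsilon> where "\<epsilon> = 1 / (3 * (B + 1) * Suc n)"
    have "0 < \<epsilon>"
      using \<open>0 \<le> B\<close> by (simp add: \<epsilon>_def)
    have "B * (3 * \<epsilon>) = B / (B + 1) / Suc n"
      using \<open>0 \<le> B\<close> by (simp add: \<epsilon>_def field_split_simps)
    also have "\<dots> \<le> 1 / Suc n"
      using \<open>0 \<le> B\<close> by (intro divide_right_mono) auto
    finally have "B * (3 * \<epsilon>) \<le> 1 / Suc n" .
    then have \<epsilon>_small: "B * (3 * \<epsilon> * real T) \<le> real T / Suc n" for T
      using mult_right_mono[of "B * (3 * \<epsilon>)" "1 / Suc n" "real T"] by (simp add: mult_ac)
    obtain G where "finite G" and G: "\<forall>S\<in>G. S \<in> sets borel \<and> nn_consistent c S"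
      and G_small: "\<forall>m\<in>Mf. measure m (- \<Union>G) < \<epsilon>"
      using finite_nn_consistent_cover_dominated[OF nu_borel nu_finite bdry dominated \<open>0 < \<epsilon>\<close>] by blast
    have \<mu>_small: "measure (\<mu> t h) (- \<Union>G) \<le> \<epsilon>" for t h
      using G_small adv_in[of t h] by (meson less_imp_le)
    have "AE \<omega> in P. \<forall>\<^sub>F T in sequentially. a T \<omega> \<le> B * (1 + real (card G)) + B * (3 * \<epsilon> * real T)"
      unfolding a_def
      by (rule AE_eventually_sum_nn_loss_le[where X = X and nn = nn, OF process loss_nonneg B loss_zero nn_min
            \<open>finite G\<close> G \<mu>_small \<open>0 < \<epsilon>\<close>])
    then show ?thesis
      by (rule AE_mp) (intro AE_I2 impI exI, auto elim!: eventually_mono dest: order_trans[OF _ add_left_mono[OF \<epsilon>_small]])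
  qed
  then have "AE \<omega> in P. \<forall>n. \<exists>M. \<forall>\<^sub>F T in sequentially. a T \<omega> \<le> M + real T / Suc n"
    by (simp add: AE_all_countable)
  then show ?thesis
    by (rule AE_mp) (auto intro!: LIMSEQ_divide_real_zero_if_sublinear sum_nonneg loss_nonneg simp: a_def)
qed

end
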